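(* Let $n$ be an odd positive integer. There exists an ordering $w_0, w_1, \ldots, w_{2^n-3}$ of the set $\mathbb{Z}_2^n\setminus\{00\cdots0,\,11\cdots1\}$ in which every two consecutive words differ in exactly one bit position, and such that for every word $w$ in the set, the positions of $w$ and of its complement $\overline{w}$ in the ordering differ by exactly $2^{n-1}-1$.
   Context: For a binary word $w\in\mathbb{Z}_2^n$, its complement $\overline{w}$ is obtained by changing every $0$ to $1$ and every $1$ to $0$ (equivalently $\overline{w}=w+11\cdots1$). *)

theory Defs
  imports Main
begin

text \<open>Binary words of length n are represented as bool lists of length n.\<close>

definition complement :: "bool list \<Rightarrow> bool list" where
  "complement w = map Not w"

definition hamming :: "bool list \<Rightarrow> bool list \<Rightarrow> nat" where
  "hamming u v = card {i. i < length u \<and> u ! i \<noteq> v ! i}"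

end

theory Submission
  imports Defs
begin

text \<open>
For even \<open>m \<ge> 2\<close> the punctured cube \<open>Q\<^sub>m - {0\<dots>0}\<close> has a Hamiltonian path from some
word \<open>u\<close> to its complement. Prefixing \<open>0\<close> to that path and appending its complemented copy
covers \<open>Q\<^sub>m\<^sub>+\<^sub>1 - {0\<dots>0, 1\<dots>1}\<close>, and every word then sits exactly \<open>2\<^sup>m - 1\<close> places away
from its complement. The paths in the punctured cubes grow two dimensions at a time, each
time by appending a Gray code of a full subcube whose end points are chosen so that the
path again ends at the complement of its start. In odd dimension both end points of such a
path have odd weight and so cannot be complementary; there the path ends instead at the
complement of its start with the second bit flipped.
\<close>

fun adjacent :: "bool list \<Rightarrow> bool list \<Rightarrow> bool" where
  "adjacent (a # u) (b # v) \<longleftrightarrow> (a \<noteq> b \<and> u = v) \<or> (a = b \<and> adjacent u v)"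
| "adjacent _ _ = False"

definition cube :: "nat \<Rightarrow> bool list set" where
  "cube k = {w. length w = k}"

definition flip_bit :: "nat \<Rightarrow> bool list \<Rightarrow> bool list" where
  "flip_bit i w = w[i := \<not> w ! i]"

fun swap_first_two :: "bool list \<Rightarrow> bool list" where
  "swap_first_two (a # b # w) = b # a # w"
| "swap_first_two w = w"

definition hamiltonian_path :: "bool list list \<Rightarrow> bool list set \<Rightarrow> bool list \<Rightarrow> bool list \<Rightarrow> bool" where
  "hamiltonian_path L S a b \<longleftrightarrow>
     distinct L \<and> set L = S \<and> L \<noteq> [] \<and> hd L = a \<and> last L = b \<and> successively adjacent L"

lemma complement_Cons [simp]: "complement (a # w) = (\<not> a) # complement w"
  by (simp add: complement_def)

lemma complement_complement [simp]: "complement (complement w) = w"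
  by (simp add: complement_def comp_def)

lemma length_complement [simp]: "length (complement w) = length w"
  by (simp add: complement_def)

lemma complement_replicate: "complement (replicate m b) = replicate m (\<not> b)"
  by (simp add: complement_def)

lemma inj_complement: "inj complement"
  by (metis injI complement_complement)

lemma complement_flip_bit: "complement (flip_bit i w) = flip_bit i (complement w)"
  by (cases "i < length w") (simp_all add: complement_def flip_bit_def map_update list_update_beyond)

lemma flip_bit_flip_bit [simp]: "flip_bit i (flip_bit i w) = w"
  by (cases "i < length w") (simp_all add: flip_bit_def list_update_beyond)

lemma flip_bit_Suc_Cons [simp]: "flip_bit (Suc i) (a # w) = a # flip_bit i w"
  by (simp add: flip_bit_def)

lemma length_flip_bit [simp]: "length (flip_bit i w) = length w"
  by (simp add: flip_bit_def)

lemma length_swap_first_two [simp]: "length (swap_first_two w) = length w"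
  by (cases w rule: swap_first_two.cases) auto

lemma swap_first_two_swap_first_two [simp]: "swap_first_two (swap_first_two w) = w"
  by (cases w rule: swap_first_two.cases) auto

lemma swap_first_two_flip_bit_0:
  "2 \<le> length w \<Longrightarrow> swap_first_two (flip_bit 0 (swap_first_two w)) = flip_bit 1 w"
  by (cases w rule: swap_first_two.cases) (auto simp: flip_bit_def)

lemma adjacent_sym: "adjacent u v \<Longrightarrow> adjacent v u"
  by (induction u v rule: adjacent.induct) auto

lemma adjacent_complement: "adjacent u v \<Longrightarrow> adjacent (complement u) (complement v)"
  by (induction u v rule: adjacent.induct) auto

lemma adjacent_swap_first_two: "adjacent u v \<Longrightarrow> adjacent (swap_first_two u) (swap_first_two v)"
  by (cases u rule: swap_first_two.cases; cases v rule: swap_first_two.cases) auto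

lemma hamming_Cons_same: "hamming (a # u) (a # v) = hamming u v"
proof -
  have "{i. i < length (a # u) \<and> (a # u) ! i \<noteq> (a # v) ! i} = Suc ` {i. i < length u \<and> u ! i \<noteq> v ! i}"
    by (auto simp: image_def less_Suc_eq_0_disj)
  then show ?thesis
    by (simp add: hamming_def card_image)
qed

lemma hamming_adjacent: "adjacent u v \<Longrightarrow> hamming u v = 1"
proof (induction u v rule: adjacent.induct)
  case (1 a u b v)
  show ?case
  proof (cases "a = b")
    case True
    with 1 show ?thesis by (simp add: hamming_Cons_same)
  next
    case False
    with 1 have "{i. i < length (a # u) \<and> (a # u) ! i \<noteq> (b # v) ! i} = {0}"
      by (auto simp: nth_Cons')
    then show ?thesis by (simp add: hamming_def)
  qed
qed auto

lemma cube_Suc: "cube (Suc k) = Cons a ` cube k \<union> Cons (\<not> a) ` cube k"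
proof -
  have "w \<in> Cons a ` cube k \<union> Cons (\<not> a) ` cube k" if "length w = Suc k" for w
    using that by (cases w) (auto simp: cube_def image_def)
  then show ?thesis by (auto simp: cube_def)
qed

lemma punctured_cube_Suc:
  "cube (Suc k) - {replicate (Suc k) False} = Cons True ` cube k \<union> Cons False ` (cube k - {replicate k False})"
  by (auto simp: cube_Suc[of _ True])

lemma card_cube: "card (cube k) = 2 ^ k"
  using card_lists_length_eq[of "UNIV :: bool set" k] by (simp add: cube_def)

lemma finite_cube: "finite (cube k)"
  by (simp add: card_cube card_ge_0_finite)

lemma complement_cube: "complement ` cube m = cube m"
  by (auto simp: cube_def image_iff) (metis complement_complement length_complement)

lemma swap_first_two_cube: "swap_first_two ` cube k = cube k"
  by (auto simp: cube_def image_iff) (metis length_swap_first_two swap_first_two_swap_first_two)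

lemma hamiltonian_path_ends_in: "hamiltonian_path L S a b \<Longrightarrow> a \<in> S \<and> b \<in> S"
  unfolding hamiltonian_path_def by (metis hd_in_set last_in_set)

lemma hamiltonian_path_map:
  assumes "hamiltonian_path L S a b" "inj_on f S" "\<And>u v. adjacent u v \<Longrightarrow> adjacent (f u) (f v)"
  shows "hamiltonian_path (map f L) (f ` S) (f a) (f b)"
  using assms by (auto simp: hamiltonian_path_def distinct_map hd_map last_map successively_map
      intro: successively_mono)

lemma hamiltonian_path_Cons:
  "hamiltonian_path L S a b \<Longrightarrow> hamiltonian_path (map (Cons x) L) (Cons x ` S) (x # a) (x # b)"
  by (rule hamiltonian_path_map) auto

lemma hamiltonian_path_rev: "hamiltonian_path L S a b \<Longrightarrow> hamiltonian_path (rev L) S b a"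
  by (auto simp: hamiltonian_path_def hd_rev last_rev intro: successively_mono adjacent_sym)

lemma hamiltonian_path_append:
  assumes "hamiltonian_path L S a b" "hamiltonian_path M T c d" "S \<inter> T = {}" "adjacent b c"
  shows "hamiltonian_path (L @ M) (S \<union> T) a d"
  using assms by (auto simp: hamiltonian_path_def successively_append_iff)

lemma gray_code_flip_bit_0: "length c = k \<Longrightarrow> \<exists>L. hamiltonian_path L (cube k) c (flip_bit 0 c)"
proof (induction k arbitrary: c)
  case 0
  then show ?case
    by (intro exI[of _ "[[]]"]) (auto simp: hamiltonian_path_def cube_def flip_bit_def)
next
  case (Suc k)
  then obtain a c' where c: "c = a # c'" and "length c' = k"
    by (cases c) auto
  with Suc.IH obtain G where G: "hamiltonian_path G (cube k) c' (flip_bit 0 c')"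
    by blast
  have "hamiltonian_path (map (Cons a) G @ map (Cons (\<not> a)) (rev G))
          (Cons a ` cube k \<union> Cons (\<not> a) ` cube k) (a # c') ((\<not> a) # c')"
    by (rule hamiltonian_path_append[OF hamiltonian_path_Cons[OF G]
          hamiltonian_path_Cons[OF hamiltonian_path_rev[OF G]]]) auto
  then show ?case
    by (auto simp: c flip_bit_def cube_Suc[symmetric])
qed

lemma gray_code_flip_bit_1:
  assumes "length c = k" "2 \<le> k"
  shows "\<exists>L. hamiltonian_path L (cube k) c (flip_bit 1 c)"
proof -
  obtain G where "hamiltonian_path G (cube k) (swap_first_two c) (flip_bit 0 (swap_first_two c))"
    using gray_code_flip_bit_0 assms(1) length_swap_first_two by blast
  then have "hamiltonian_path (map swap_first_two G) (swap_first_two ` cube k)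
               (swap_first_two (swap_first_two c)) (swap_first_two (flip_bit 0 (swap_first_two c)))"
    by (rule hamiltonian_path_map)
      (metis inj_on_inverseI swap_first_two_swap_first_two, rule adjacent_swap_first_two)
  then show ?thesis
    using assms by (auto simp: swap_first_two_cube swap_first_two_flip_bit_0)
qed

lemma punctured_path_odd_step:
  assumes L: "hamiltonian_path L (cube j - {replicate j False}) u (complement u)"
  shows "\<exists>L' x. hamiltonian_path L' (cube (Suc j) - {replicate (Suc j) False}) x (flip_bit 1 (complement x))"
proof -
  have "length (flip_bit 0 u) = j"
    using hamiltonian_path_ends_in[OF L] by (simp add: cube_def)
  then obtain G where G: "hamiltonian_path G (cube j) (flip_bit 0 u) u"
    using gray_code_flip_bit_0[of "flip_bit 0 u" j] by auto
  have "hamiltonian_path (map (Cons True) G @ map (Cons False) L)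
          (cube (Suc j) - {replicate (Suc j) False}) (True # flip_bit 0 u) (False # complement u)"
    unfolding punctured_cube_Suc
    by (rule hamiltonian_path_append[OF hamiltonian_path_Cons[OF G] hamiltonian_path_Cons[OF L]]) auto
  moreover have "flip_bit 1 (complement (True # flip_bit 0 u)) = False # complement u"
    by (simp add: complement_flip_bit)
  ultimately show ?thesis
    by metis
qed

lemma punctured_path_even_step:
  assumes L: "hamiltonian_path L (cube k - {replicate k False}) x (flip_bit 1 (complement x))" and "2 \<le> k"
  shows "\<exists>L' u. hamiltonian_path L' (cube (Suc k) - {replicate (Suc k) False}) u (complement u)"
proof -
  have "length (flip_bit 1 (complement x)) = k"
    using hamiltonian_path_ends_in[OF L] by (simp add: cube_def)
  then obtain G where G: "hamiltonian_path G (cube k) (flip_bit 1 (complement x)) (complement x)"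
    using gray_code_flip_bit_1[of "flip_bit 1 (complement x)" k] \<open>2 \<le> k\<close> by auto
  have "hamiltonian_path (map (Cons False) L @ map (Cons True) G)
          (cube (Suc k) - {replicate (Suc k) False}) (False # x) (True # complement x)"
    unfolding punctured_cube_Suc Un_commute[of "Cons True ` _"]
    by (rule hamiltonian_path_append[OF hamiltonian_path_Cons[OF L] hamiltonian_path_Cons[OF G]]) auto
  then show ?thesis
    by (metis complement_Cons)
qed

lemma antipodal_punctured_path:
  "\<exists>L u. hamiltonian_path L (cube (2 * i + 2) - {replicate (2 * i + 2) False}) u (complement u)"
proof (induction i)
  case 0
  have "cube 2 - {replicate 2 False} = set [[False, True], [True, True], [True, False]]"
    by (auto simp: cube_def numeral_2_eq_2 length_Suc_conv)
  then have "hamiltonian_path [[False, True], [True, True], [True, False]]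
               (cube 2 - {replicate 2 False}) [False, True] (complement [False, True])"
    by (simp add: hamiltonian_path_def complement_def)
  then show ?case
    by (simp only: mult_0_right add_0) blast
next
  case (Suc i)
  have m: "2 * Suc i + 2 = Suc (Suc (2 * i + 2))"
    by simp
  from Suc.IH obtain L u
    where "hamiltonian_path L (cube (2 * i + 2) - {replicate (2 * i + 2) False}) u (complement u)"
    by blast
  from punctured_path_odd_step[OF this] obtain L' x
    where "hamiltonian_path L' (cube (Suc (2 * i + 2)) - {replicate (Suc (2 * i + 2)) False}) x
             (flip_bit 1 (complement x))"
    by blast
  then show ?case
    unfolding m by (rule punctured_path_even_step) simp
qed

lemma cube_Suc_minus_constants:
  "Cons False ` (cube m - {replicate m False}) \<union> complement ` Cons False ` (cube m - {replicate m False})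
     = cube (Suc m) - {replicate (Suc m) False, replicate (Suc m) True}"
proof -
  have "complement ` Cons False ` (cube m - {replicate m False})
          = Cons True ` complement ` (cube m - {replicate m False})"
    by (simp add: image_image)
  also have "complement ` (cube m - {replicate m False}) = cube m - {replicate m True}"
    by (simp add: image_set_diff[OF inj_complement] complement_cube complement_replicate)
  finally show ?thesis
    by (auto simp: cube_Suc[of _ False])
qed

lemma antipodal_positions:
  assumes "distinct (H @ map complement H)" "i < 2 * length H" "j < 2 * length H"
    and "(H @ map complement H) ! j = complement ((H @ map complement H) ! i)"
  shows "\<bar>int i - int j\<bar> = int (length H)"
proof -
  define p where "p = (if i < length H then i + length H else i - length H)"
  have "p < 2 * length H" "(H @ map complement H) ! p = complement ((H @ map complement H) ! i)"
    using assms(2) by (auto simp: p_def nth_append)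
  moreover have "length (H @ map complement H) = 2 * length H"
    by simp
  ultimately have "j = p"
    using assms(1,3,4) by (metis nth_eq_iff_index_eq)
  then show ?thesis
    by (auto simp: p_def)
qed

lemma antipodal_doubling:
  assumes L: "hamiltonian_path L (cube m - {replicate m False}) u (complement u)"
  defines "H \<equiv> map (Cons False) L"
  shows "hamiltonian_path (H @ map complement H)
           (cube (Suc m) - {replicate (Suc m) False, replicate (Suc m) True}) (False # u) (True # u)"
proof -
  have H: "hamiltonian_path H (Cons False ` (cube m - {replicate m False})) (False # u) (False # complement u)"
    unfolding H_def by (rule hamiltonian_path_Cons[OF L])
  have "hamiltonian_path (map complement H) (complement ` Cons False ` (cube m - {replicate m False}))
          (complement (False # u)) (complement (False # complement u))"
    by (rule hamiltonian_path_map[OF H]) (auto intro: inj_on_subset[OF inj_complement] adjacent_complement)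
  then show ?thesis
    unfolding cube_Suc_minus_constants[symmetric]
    by (intro hamiltonian_path_append[OF H]) auto
qed

lemma length_punctured_path:
  assumes "hamiltonian_path L (cube m - {replicate m False}) u v"
  shows "length L = 2 ^ m - 1"
proof -
  have "replicate m False \<in> cube m"
    by (simp add: cube_def)
  then have "card (cube m - {replicate m False}) = 2 ^ m - 1"
    by (simp add: card_Diff_singleton finite_cube card_cube)
  then show ?thesis
    using assms distinct_card unfolding hamiltonian_path_def by metis
qed

theorem theorem1:
  fixes n :: nat
  assumes "odd n"
  shows "\<exists>ws :: bool list list.
     distinct ws \<and>
     set ws = {w. length w = n} - {replicate n False, replicate n True} \<and>
     (\<forall>i. Suc i < length ws \<longrightarrow> hamming (ws ! i) (ws ! Suc i) = 1) \<and>
     (\<forall>i j. i < length ws \<and> j < length ws \<and> ws ! j = complement (ws ! i) \<longrightarrow>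
        \<bar>int i - int j\<bar> = 2 ^ (n - 1) - 1)"
proof (cases "n = 1")
  case True
  have "{w. length w = n} - {replicate n False, replicate n True} = {}"
    using True by (auto simp: length_Suc_conv)
  then show ?thesis
    by (intro exI[of _ "[]"]) simp
next
  case False
  from assms obtain k where "n = 2 * k + 1"
    by (rule oddE)
  with False obtain i where n: "n = Suc (2 * i + 2)"
    by (cases k) auto
  obtain L u where L: "hamiltonian_path L (cube (2 * i + 2) - {replicate (2 * i + 2) False}) u (complement u)"
    using antipodal_punctured_path by blast
  define H where "H = map (Cons False) L"
  define ws where "ws = H @ map complement H"
  have "hamiltonian_path ws (cube n - {replicate n False, replicate n True}) (False # u) (True # u)"
    unfolding ws_def H_def n by (rule antipodal_doubling[OF L])
  then have ws: "distinct ws" "set ws = {w. length w = n} - {replicate n False, replicate n True}"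
    "successively adjacent ws"
    by (simp_all add: hamiltonian_path_def cube_def)
  have "int (length H) = 2 ^ (n - 1) - 1"
    using length_punctured_path[OF L] by (simp add: H_def n of_nat_diff)
  moreover have "length ws = 2 * length H"
    by (simp add: ws_def)
  ultimately show ?thesis
    using ws antipodal_positions[of H] successively_nth[OF ws(3)] hamming_adjacent
    by (intro exI[of _ ws]) (simp add: ws_def)
qed

end
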